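(* Let $R$ be an abelian ring and $\alpha$ a ring endomorphism of $R$. The following are equivalent: (1) $R$ is weakly $r$-clean; (2) the formal power series ring $R[[x]]$ is weakly $r$-clean; (3) the skew formal power series ring $R[[x;\alpha]]$ is weakly $r$-clean.
   Context: Rings are associative with identity; $R$ is abelian if all idempotents are central. $Idem(R)$ denotes idempotents and $Reg(R)=\{r: r=ryr \text{ for some } y\in R\}$ regular elements. An element is weakly $r$-clean if it equals $r+e$ or $r-e$ with $r\in Reg(R)$, $e\in Idem(R)$; a ring is weakly $r$-clean if all elements are. $R[[x;\alpha]]$ is the ring of formal power series $\sum_{i\ge0}a_ix^i$ with $a_i\in R$, with multiplication determined by $xr=\alpha(r)x$ for $r\in R$; $R[[x]]=R[[x;\mathrm{id}_R]]$. *)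

theory Defs
  imports "HOL-Algebra.Ring" "HOL-Algebra.RingHom"
begin

definition Idem_el :: "('a, 'b) ring_scheme \<Rightarrow> 'a set" where
  "Idem_el R = {e \<in> carrier R. mult R e e = e}"

definition Reg_el :: "('a, 'b) ring_scheme \<Rightarrow> 'a set" where
  "Reg_el R = {r \<in> carrier R. \<exists>y \<in> carrier R. r = mult R (mult R r y) r}"

definition abelian_ring :: "('a, 'b) ring_scheme \<Rightarrow> bool" where
  "abelian_ring R \<longleftrightarrow> (\<forall>e \<in> Idem_el R. \<forall>x \<in> carrier R. mult R e x = mult R x e)"

definition weakly_r_clean_elem :: "('a, 'b) ring_scheme \<Rightarrow> 'a \<Rightarrow> bool" where
  "weakly_r_clean_elem R a \<longleftrightarrow>
     (\<exists>r \<in> Reg_el R. \<exists>e \<in> Idem_el R. a = add R r e \<or> a = a_minus R r e)"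

definition weakly_r_clean :: "('a, 'b) ring_scheme \<Rightarrow> bool" where
  "weakly_r_clean R \<longleftrightarrow> (\<forall>a \<in> carrier R. weakly_r_clean_elem R a)"

text \<open>Skew formal power series ring R[[x;\<alpha>]]: a series \<Sum> a_i x^i is its
  coefficient sequence; multiplication from x r = \<alpha>(r) x, i.e.
  (f g)_n = \<Sum>_{i+j=n} f_i \<alpha>^i(g_j).\<close>

definition skew_fps :: "('a, 'b) ring_scheme \<Rightarrow> ('a \<Rightarrow> 'a) \<Rightarrow> (nat \<Rightarrow> 'a) ring" where
  "skew_fps R \<alpha> =
     \<lparr> carrier = {f. \<forall>n. f n \<in> carrier R},
       mult = (\<lambda>f g n. finsum R (\<lambda>i. mult R (f i) ((\<alpha> ^^ i) (g (n - i)))) {0..n}),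
       one = (\<lambda>n. if n = 0 then one R else zero R),
       zero = (\<lambda>n. zero R),
       add = (\<lambda>f g n. add R (f n) (g n)) \<rparr>"

definition fps_ring :: "('a, 'b) ring_scheme \<Rightarrow> (nat \<Rightarrow> 'a) ring" where
  "fps_ring R = skew_fps R id"

end

theory Submission
  imports Defs
begin

text \<open>In an abelian ring every weakly r-clean element is u \<plusminus> e with u right invertible and e
  idempotent: if r = r y r, the central idempotent r y splits R into two corners, r is right
  invertible in the first, and in the second the idempotent e0 of r + e0 is traded for the
  central involution 2 e0 - 1. A skew power series whose constant term is right invertible is right
  invertible (its coefficients are solved degree by degree), hence regular, and constant
  idempotents stay idempotent; so a series is weakly r-clean as soon as its constant term is.
  Conversely, the constant term of a regular element or of an idempotent is again one.
  Only \<alpha>(R) \<subseteq> R is used, never that \<alpha> is a homomorphism.\<close>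

lemma Idem_elI: "e \<in> carrier R \<Longrightarrow> e \<otimes>\<^bsub>R\<^esub> e = e \<Longrightarrow> e \<in> Idem_el R"
  unfolding Idem_el_def by simp

lemma Idem_elD: "e \<in> Idem_el R \<Longrightarrow> e \<in> carrier R" "e \<in> Idem_el R \<Longrightarrow> e \<otimes>\<^bsub>R\<^esub> e = e"
  unfolding Idem_el_def by simp_all

lemma Reg_elI: "r \<in> carrier R \<Longrightarrow> y \<in> carrier R \<Longrightarrow> r = r \<otimes>\<^bsub>R\<^esub> y \<otimes>\<^bsub>R\<^esub> r \<Longrightarrow> r \<in> Reg_el R"
  unfolding Reg_el_def by blast

lemma Reg_elD: "r \<in> Reg_el R \<Longrightarrow> r \<in> carrier R"
  unfolding Reg_el_def by simp

lemma Reg_elE: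
  assumes "r \<in> Reg_el R"
  obtains y where "r \<in> carrier R" "y \<in> carrier R" "r = r \<otimes>\<^bsub>R\<^esub> y \<otimes>\<^bsub>R\<^esub> r"
  using assms unfolding Reg_el_def by blast

lemma abelian_ringD: "abelian_ring R \<Longrightarrow> e \<in> Idem_el R \<Longrightarrow> x \<in> carrier R \<Longrightarrow> e \<otimes>\<^bsub>R\<^esub> x = x \<otimes>\<^bsub>R\<^esub> e"
  unfolding abelian_ring_def by blast

context ring
begin

lemma Idem_el_mult_one_minus:
  assumes "e \<in> Idem_el R"
  shows "e \<otimes> (\<one> \<ominus> e) = \<zero>" "(\<one> \<ominus> e) \<otimes> e = \<zero>"
  using Idem_elD[OF assms] by (simp_all add: minus_eq r_distr l_distr r_minus l_minus r_neg)

lemma Idem_el_one_minus: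
  assumes e: "e \<in> Idem_el R"
  shows "\<one> \<ominus> e \<in> Idem_el R"
proof (rule Idem_elI)
  show "(\<one> \<ominus> e) \<otimes> (\<one> \<ominus> e) = \<one> \<ominus> e"
    using Idem_elD(1)[OF e] Idem_el_mult_one_minus(1)[OF e]
    by (simp add: minus_eq l_distr l_minus)
qed (use Idem_elD[OF e] in simp)

lemma Reg_el_uminus: "r \<in> Reg_el R \<Longrightarrow> \<ominus> r \<in> Reg_el R"
proof -
  assume "r \<in> Reg_el R"
  then obtain y where r: "r \<in> carrier R" "y \<in> carrier R" "r = r \<otimes> y \<otimes> r"
    by (rule Reg_elE)
  then have "\<ominus> r = \<ominus> r \<otimes> \<ominus> y \<otimes> \<ominus> r"
    by (simp add: l_minus r_minus)
  then show ?thesis using r by (intro Reg_elI[where y = "\<ominus> y"]) simp_all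
qed

lemma Idem_el_mult:
  assumes e: "e \<in> Idem_el R" and f: "f \<in> Idem_el R" and ef: "e \<otimes> f = f \<otimes> e"
  shows "e \<otimes> f \<in> Idem_el R"
proof (rule Idem_elI)
  note carr = Idem_elD(1)[OF e] Idem_elD(1)[OF f]
  have "e \<otimes> f \<otimes> (e \<otimes> f) = e \<otimes> (f \<otimes> e) \<otimes> f"
    using carr by (simp add: m_assoc)
  also have "\<dots> = e \<otimes> e \<otimes> (f \<otimes> f)"
    unfolding ef[symmetric] using carr by (simp add: m_assoc)
  finally show "e \<otimes> f \<otimes> (e \<otimes> f) = e \<otimes> f"
    using Idem_elD[OF e] Idem_elD[OF f] by simp
qed (use Idem_elD[OF e] Idem_elD[OF f] in simp)

lemma Idem_el_add:
  assumes e: "e \<in> Idem_el R" and f: "f \<in> Idem_el R" and "e \<otimes> f = \<zero>" "f \<otimes> e = \<zero>"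
  shows "e \<oplus> f \<in> Idem_el R"
  using assms Idem_elD[OF e] Idem_elD[OF f]
  by (intro Idem_elI) (simp_all add: l_distr r_distr)

lemma central_mult_left_commute:
  assumes c: "\<And>x. x \<in> carrier R \<Longrightarrow> c \<otimes> x = x \<otimes> c" "c \<in> carrier R"
    and ab: "a \<in> carrier R" "b \<in> carrier R"
  shows "a \<otimes> (c \<otimes> b) = c \<otimes> (a \<otimes> b)"
proof -
  have "a \<otimes> (c \<otimes> b) = (a \<otimes> c) \<otimes> b" using c ab by (simp add: m_assoc)
  also have "\<dots> = c \<otimes> (a \<otimes> b)" using c ab by (simp add: m_assoc)
  finally show ?thesis .
qed

lemma Idem_el_of_regular:
  "r \<in> carrier R \<Longrightarrow> y \<in> carrier R \<Longrightarrow> r = r \<otimes> y \<otimes> r \<Longrightarrow> r \<otimes> y \<in> Idem_el R"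
  by (intro Idem_elI) (simp_all add: m_assoc[symmetric])

lemma Idem_el_reflection_square:
  assumes e: "e \<in> Idem_el R"
  shows "(e \<ominus> (\<one> \<ominus> e)) \<otimes> (e \<ominus> (\<one> \<ominus> e)) = \<one>"
proof -
  note h = Idem_el_one_minus[OF e]
  note carr = Idem_elD(1)[OF e] Idem_elD(1)[OF h]
  have "(e \<ominus> (\<one> \<ominus> e)) \<otimes> (e \<ominus> (\<one> \<ominus> e))
      = e \<otimes> e \<oplus> (\<one> \<ominus> e) \<otimes> (\<one> \<ominus> e) \<ominus> (e \<otimes> (\<one> \<ominus> e) \<oplus> (\<one> \<ominus> e) \<otimes> e)"
    using carr by algebra
  also have "\<dots> = e \<oplus> (\<one> \<ominus> e)"
    using Idem_el_mult_one_minus[OF e] Idem_elD(2)[OF e] Idem_elD(2)[OF h] carr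
    by (simp add: minus_eq)
  finally show ?thesis
    using carr by algebra
qed

lemma abelian_ring_Idem_el_corner_sum:
  assumes ab: "abelian_ring R" and e: "e \<in> Idem_el R" and f: "f \<in> Idem_el R"
  shows "e \<otimes> f \<oplus> (\<one> \<ominus> e) \<otimes> (\<one> \<ominus> f) \<in> Idem_el R"
proof (rule Idem_el_add)
  note g = Idem_el_one_minus[OF e] and h = Idem_el_one_minus[OF f]
  note carr = Idem_elD(1)[OF e] Idem_elD(1)[OF g] Idem_elD(1)[OF f] Idem_elD(1)[OF h]
  note central = abelian_ringD[OF ab]
  show "e \<otimes> f \<in> Idem_el R" using e f central[OF f] carr by (simp add: Idem_el_mult)
  show "(\<one> \<ominus> e) \<otimes> (\<one> \<ominus> f) \<in> Idem_el R" using g h central[OF h] carr by (simp add: Idem_el_mult)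
  have "e \<otimes> f \<otimes> ((\<one> \<ominus> e) \<otimes> (\<one> \<ominus> f)) = f \<otimes> (e \<otimes> (\<one> \<ominus> e) \<otimes> (\<one> \<ominus> f))"
    using carr central_mult_left_commute[OF central[OF f]] by (simp add: m_assoc)
  then show "e \<otimes> f \<otimes> ((\<one> \<ominus> e) \<otimes> (\<one> \<ominus> f)) = \<zero>"
    using carr Idem_el_mult_one_minus[OF e] by simp
  have "(\<one> \<ominus> e) \<otimes> (\<one> \<ominus> f) \<otimes> (e \<otimes> f) = (\<one> \<ominus> f) \<otimes> ((\<one> \<ominus> e) \<otimes> e \<otimes> f)"
    using carr central_mult_left_commute[OF central[OF h]] by (simp add: m_assoc)
  then show "(\<one> \<ominus> e) \<otimes> (\<one> \<ominus> f) \<otimes> (e \<otimes> f) = \<zero>"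
    using carr Idem_el_mult_one_minus[OF e] by simp
qed

lemma regular_add_corner_right_inverse:
  assumes ab: "abelian_ring R" and r: "r \<in> carrier R" and y: "y \<in> carrier R"
    and ryr: "r = r \<otimes> y \<otimes> r" and s: "s \<in> carrier R" "s \<otimes> s = \<one>"
    and s_central: "\<And>x. x \<in> carrier R \<Longrightarrow> s \<otimes> x = x \<otimes> s"
  shows "(r \<oplus> (\<one> \<ominus> r \<otimes> y) \<otimes> s) \<otimes> (r \<otimes> y \<otimes> y \<oplus> (\<one> \<ominus> r \<otimes> y) \<otimes> s) = \<one>"
proof -
  define e where "e = r \<otimes> y"
  define g where "g = \<one> \<ominus> e"
  have e: "e \<in> Idem_el R" unfolding e_def using r y ryr by (rule Idem_el_of_regular)
  have g: "g \<in> Idem_el R" unfolding g_def using e by (rule Idem_el_one_minus)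
  note carr = Idem_elD(1)[OF e] Idem_elD(1)[OF g]
  have re: "r \<otimes> e = r"
    using abelian_ringD[OF ab e r] ryr by (simp add: e_def)
  have "r \<otimes> (e \<otimes> y) = e"
    using r y carr re by (simp add: e_def m_assoc[symmetric])
  moreover have "r \<otimes> (g \<otimes> s) = \<zero>"
  proof -
    have "r \<otimes> g = \<zero>"
      unfolding g_def using r carr re by (simp add: minus_eq r_distr r_minus r_neg)
    then show ?thesis using r carr s by (simp add: m_assoc[symmetric])
  qed
  moreover have "g \<otimes> s \<otimes> (e \<otimes> y) = s \<otimes> (g \<otimes> e \<otimes> y)"
    using carr s y central_mult_left_commute[OF s_central s(1)] by (simp add: m_assoc)
  moreover have "g \<otimes> s \<otimes> (g \<otimes> s) = g \<otimes> g \<otimes> (s \<otimes> s)"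
    using carr s(1) central_mult_left_commute[OF s_central s(1)] by (simp add: m_assoc)
  moreover have "e \<oplus> g = \<one>"
    unfolding g_def using carr by algebra
  ultimately have "(r \<oplus> g \<otimes> s) \<otimes> (e \<otimes> y \<oplus> g \<otimes> s) = \<one>"
    using r y carr s Idem_el_mult_one_minus(2)[OF e] Idem_elD(2)[OF g]
    by (simp add: l_distr r_distr g_def)
  then show ?thesis by (simp add: e_def g_def)
qed

lemma regular_plus_idem_eq_right_unit_plus_idem:
  assumes ab: "abelian_ring R" and r: "r \<in> Reg_el R" and e0: "e0 \<in> Idem_el R"
  obtains U W E where "U \<in> carrier R" "W \<in> carrier R" "U \<otimes> W = \<one>" "E \<in> Idem_el R"
    "r \<oplus> e0 = U \<oplus> E"
proof -
  obtain y where rc: "r \<in> carrier R" and y: "y \<in> carrier R" and ryr: "r = r \<otimes> y \<otimes> r"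
    using r by (rule Reg_elE)
  define s where "s = e0 \<ominus> (\<one> \<ominus> e0)"
  have e0c: "e0 \<in> carrier R" using e0 by (rule Idem_elD)
  have sc: "s \<in> carrier R" unfolding s_def using e0c by simp
  have "\<And>x. x \<in> carrier R \<Longrightarrow> s \<otimes> x = x \<otimes> s"
    unfolding s_def using e0c abelian_ringD[OF ab e0]
    by (simp add: minus_eq l_distr r_distr l_minus r_minus)
  then have UW: "(r \<oplus> (\<one> \<ominus> r \<otimes> y) \<otimes> s) \<otimes> (r \<otimes> y \<otimes> y \<oplus> (\<one> \<ominus> r \<otimes> y) \<otimes> s) = \<one>"
    using regular_add_corner_right_inverse[OF ab rc y ryr sc] Idem_el_reflection_square[OF e0]
    by (simp add: s_def)
  have E: "r \<otimes> y \<otimes> e0 \<oplus> (\<one> \<ominus> r \<otimes> y) \<otimes> (\<one> \<ominus> e0) \<in> Idem_el R"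
    using abelian_ring_Idem_el_corner_sum[OF ab Idem_el_of_regular[OF rc y ryr] e0] .
  have "r \<oplus> e0 = r \<oplus> (\<one> \<ominus> r \<otimes> y) \<otimes> s \<oplus> (r \<otimes> y \<otimes> e0 \<oplus> (\<one> \<ominus> r \<otimes> y) \<otimes> (\<one> \<ominus> e0))"
    unfolding s_def using rc y e0c by algebra
  from that[OF _ _ UW E this] show ?thesis
    using rc y sc by simp
qed

lemma weakly_r_clean_elem_right_unit_idem:
  assumes ab: "abelian_ring R" and a: "weakly_r_clean_elem R a"
  obtains U W E where "U \<in> carrier R" "W \<in> carrier R" "U \<otimes> W = \<one>" "E \<in> Idem_el R"
    "a = U \<oplus> E \<or> a = U \<ominus> E"
proof -
  obtain r e0 where r: "r \<in> Reg_el R" and e0: "e0 \<in> Idem_el R"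
    and a_cases: "a = r \<oplus> e0 \<or> a = r \<ominus> e0"
    using a unfolding weakly_r_clean_elem_def by blast
  from a_cases show ?thesis
  proof
    assume "a = r \<oplus> e0"
    then show ?thesis
      using regular_plus_idem_eq_right_unit_plus_idem[OF ab r e0] that by metis
  next
    assume a_minus: "a = r \<ominus> e0"
    obtain U W E where U: "U \<in> carrier R" and W: "W \<in> carrier R" and UW: "U \<otimes> W = \<one>"
      and E: "E \<in> Idem_el R" and sum: "\<ominus> r \<oplus> e0 = U \<oplus> E"
      by (rule regular_plus_idem_eq_right_unit_plus_idem[OF ab Reg_el_uminus[OF r] e0])
    have "a = \<ominus> (\<ominus> r \<oplus> e0)"
      using a_minus Reg_elD[OF r] Idem_elD(1)[OF e0] by (simp add: minus_eq minus_add)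
    also have "\<dots> = \<ominus> U \<ominus> E"
      using sum U E by (simp add: Idem_elD minus_eq minus_add)
    finally have "a = \<ominus> U \<ominus> E" .
    moreover have "\<ominus> U \<otimes> \<ominus> W = \<one>"
      using U W UW by (simp add: l_minus r_minus)
    ultimately show ?thesis
      using that U W E by blast
  qed
qed

end

definition const_fps :: "('a, 'b) ring_scheme \<Rightarrow> 'a \<Rightarrow> nat \<Rightarrow> 'a" where
  "const_fps R a = (\<lambda>n. if n = 0 then a else \<zero>\<^bsub>R\<^esub>)"

text \<open>Stage n fixes the coefficients of degree at most n of a right inverse of f, given a right
  inverse w of f 0: the coefficient of degree n + 1 is solved from (f g)(n + 1) = 0.\<close>

primrec skew_rinv_stage ::
  "('a, 'b) ring_scheme \<Rightarrow> ('a \<Rightarrow> 'a) \<Rightarrow> (nat \<Rightarrow> 'a) \<Rightarrow> 'a \<Rightarrow> nat \<Rightarrow> nat \<Rightarrow> 'a" where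
  "skew_rinv_stage R \<alpha> f w 0 = (\<lambda>_. w)"
| "skew_rinv_stage R \<alpha> f w (Suc n) = (skew_rinv_stage R \<alpha> f w n)(Suc n :=
     \<ominus>\<^bsub>R\<^esub> (w \<otimes>\<^bsub>R\<^esub> (\<Oplus>\<^bsub>R\<^esub>i\<in>{1..Suc n}.
        f i \<otimes>\<^bsub>R\<^esub> (\<alpha> ^^ i) (skew_rinv_stage R \<alpha> f w n (Suc n - i)))))"

definition skew_rinv :: "('a, 'b) ring_scheme \<Rightarrow> ('a \<Rightarrow> 'a) \<Rightarrow> (nat \<Rightarrow> 'a) \<Rightarrow> 'a \<Rightarrow> nat \<Rightarrow> 'a" where
  "skew_rinv R \<alpha> f w n = skew_rinv_stage R \<alpha> f w n n"

context ring
begin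

lemma skew_fps_carrier [simp]: "f \<in> carrier (skew_fps R \<alpha>) \<longleftrightarrow> (\<forall>n. f n \<in> carrier R)"
  by (simp add: skew_fps_def)

lemma skew_fps_add [simp]: "(f \<oplus>\<^bsub>skew_fps R \<alpha>\<^esub> g) n = f n \<oplus> g n"
  by (simp add: skew_fps_def)

lemma skew_fps_mult: "(f \<otimes>\<^bsub>skew_fps R \<alpha>\<^esub> g) n = (\<Oplus>i\<in>{0..n}. f i \<otimes> (\<alpha> ^^ i) (g (n - i)))"
  by (simp add: skew_fps_def)

lemma skew_fps_one: "\<one>\<^bsub>skew_fps R \<alpha>\<^esub> = const_fps R \<one>"
  by (simp add: skew_fps_def const_fps_def)

lemma skew_fps_a_inv:
  assumes "f \<in> carrier (skew_fps R \<alpha>)"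
  shows "\<ominus>\<^bsub>skew_fps R \<alpha>\<^esub> f = (\<lambda>n. \<ominus> f n)"
  unfolding a_inv_def[of "skew_fps R \<alpha>"] m_inv_def[of "add_monoid (skew_fps R \<alpha>)"] using assms
  by (intro the_equality)
    (auto simp: skew_fps_def fun_eq_iff l_neg r_neg intro: minus_equality[symmetric])

lemma skew_fps_a_minus [simp]:
  "g \<in> carrier (skew_fps R \<alpha>) \<Longrightarrow> (f \<ominus>\<^bsub>skew_fps R \<alpha>\<^esub> g) n = f n \<ominus> g n"
  by (simp add: a_minus_def skew_fps_a_inv del: skew_fps_carrier)

lemma funpow_closed: "\<alpha> \<in> carrier R \<rightarrow> carrier R \<Longrightarrow> x \<in> carrier R \<Longrightarrow> (\<alpha> ^^ i) x \<in> carrier R"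
  by (induction i) auto

lemma skew_fps_mult_0:
  "f 0 \<in> carrier R \<Longrightarrow> g 0 \<in> carrier R \<Longrightarrow> (f \<otimes>\<^bsub>skew_fps R \<alpha>\<^esub> g) 0 = f 0 \<otimes> g 0"
  by (simp add: skew_fps_mult)

lemma skew_fps_const_mult:
  assumes \<alpha>: "\<alpha> \<in> carrier R \<rightarrow> carrier R" and a: "a \<in> carrier R"
    and g: "g \<in> carrier (skew_fps R \<alpha>)"
  shows "(const_fps R a \<otimes>\<^bsub>skew_fps R \<alpha>\<^esub> g) n = a \<otimes> g n"
proof -
  have "(const_fps R a \<otimes>\<^bsub>skew_fps R \<alpha>\<^esub> g) n = (\<Oplus>i\<in>{0..n}. if i = 0 then a \<otimes> g (n - i) else \<zero>)"
    unfolding skew_fps_mult using a g by (intro finsum_cong') (auto simp: const_fps_def funpow_closed[OF \<alpha>])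
  also have "\<dots> = a \<otimes> g (n - 0)"
    using a g by (intro add.finprod_singleton_swap) auto
  finally show ?thesis by simp
qed

lemma skew_fps_one_mult:
  "\<alpha> \<in> carrier R \<rightarrow> carrier R \<Longrightarrow> g \<in> carrier (skew_fps R \<alpha>) \<Longrightarrow> \<one>\<^bsub>skew_fps R \<alpha>\<^esub> \<otimes>\<^bsub>skew_fps R \<alpha>\<^esub> g = g"
  by (simp add: skew_fps_one skew_fps_const_mult fun_eq_iff)

lemma const_fps_Idem_el:
  assumes "\<alpha> \<in> carrier R \<rightarrow> carrier R" and e: "e \<in> Idem_el R"
  shows "const_fps R e \<in> Idem_el (skew_fps R \<alpha>)"
proof (rule Idem_elI)
  show "const_fps R e \<in> carrier (skew_fps R \<alpha>)"
    using Idem_elD(1)[OF e] by (simp add: const_fps_def)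
  then show "const_fps R e \<otimes>\<^bsub>skew_fps R \<alpha>\<^esub> const_fps R e = const_fps R e"
    using assms Idem_elD[OF e] by (simp add: skew_fps_const_mult fun_eq_iff) (simp add: const_fps_def)
qed

lemma skew_rinv_stage_closed:
  assumes \<alpha>: "\<alpha> \<in> carrier R \<rightarrow> carrier R" and f: "f \<in> carrier (skew_fps R \<alpha>)"
    and w: "w \<in> carrier R"
  shows "skew_rinv_stage R \<alpha> f w n k \<in> carrier R"
proof (induction n arbitrary: k)
  case (Suc n)
  have "(\<Oplus>i\<in>{1..Suc n}. f i \<otimes> (\<alpha> ^^ i) (skew_rinv_stage R \<alpha> f w n (Suc n - i))) \<in> carrier R"
    using f by (intro finsum_closed) (auto intro: funpow_closed[OF \<alpha>] Suc.IH)
  then show ?case using Suc.IH w by simp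
qed (use w in simp)

lemma skew_rinv_closed:
  assumes "\<alpha> \<in> carrier R \<rightarrow> carrier R" "f \<in> carrier (skew_fps R \<alpha>)" "w \<in> carrier R"
  shows "skew_rinv R \<alpha> f w \<in> carrier (skew_fps R \<alpha>)"
  using skew_rinv_stage_closed[OF assms] by (simp add: skew_rinv_def)

lemma skew_rinv_stage_eq: "k \<le> n \<Longrightarrow> skew_rinv_stage R \<alpha> f w n k = skew_rinv R \<alpha> f w k"
  by (induction n) (auto simp: skew_rinv_def le_Suc_eq)

lemma skew_rinv_0: "skew_rinv R \<alpha> f w 0 = w"
  by (simp add: skew_rinv_def)

lemma skew_rinv_Suc:
  assumes \<alpha>: "\<alpha> \<in> carrier R \<rightarrow> carrier R" and f: "f \<in> carrier (skew_fps R \<alpha>)"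
    and w: "w \<in> carrier R"
  shows "skew_rinv R \<alpha> f w (Suc n) =
    \<ominus> (w \<otimes> (\<Oplus>i\<in>{1..Suc n}. f i \<otimes> (\<alpha> ^^ i) (skew_rinv R \<alpha> f w (Suc n - i))))"
proof -
  have "(\<Oplus>i\<in>{1..Suc n}. f i \<otimes> (\<alpha> ^^ i) (skew_rinv_stage R \<alpha> f w n (Suc n - i)))
      = (\<Oplus>i\<in>{1..Suc n}. f i \<otimes> (\<alpha> ^^ i) (skew_rinv R \<alpha> f w (Suc n - i)))"
    using f skew_rinv_closed[OF assms]
    by (intro finsum_cong') (auto simp: skew_rinv_stage_eq intro: funpow_closed[OF \<alpha>])
  then show ?thesis by (simp add: skew_rinv_def)
qed

lemma skew_rinv_right_inverse:
  assumes \<alpha>: "\<alpha> \<in> carrier R \<rightarrow> carrier R" and f: "f \<in> carrier (skew_fps R \<alpha>)"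
    and w: "w \<in> carrier R" and fw: "f 0 \<otimes> w = \<one>"
  shows "f \<otimes>\<^bsub>skew_fps R \<alpha>\<^esub> skew_rinv R \<alpha> f w = \<one>\<^bsub>skew_fps R \<alpha>\<^esub>"
proof
  fix n
  define g where "g = skew_rinv R \<alpha> f w"
  have g: "\<And>k. g k \<in> carrier R"
    using skew_rinv_closed[OF assms(1-3)] by (simp add: g_def)
  show "(f \<otimes>\<^bsub>skew_fps R \<alpha>\<^esub> g) n = \<one>\<^bsub>skew_fps R \<alpha>\<^esub> n"
  proof (cases n)
    case 0
    then show ?thesis
      using f w fw by (simp add: skew_fps_mult skew_fps_one const_fps_def g_def skew_rinv_0)
  next
    case (Suc m)
    define S where "S = (\<Oplus>i\<in>{1..Suc m}. f i \<otimes> (\<alpha> ^^ i) (g (Suc m - i)))"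
    have S: "S \<in> carrier R"
      unfolding S_def using f g by (intro finsum_closed) (auto intro: funpow_closed[OF \<alpha>])
    have "f 0 \<otimes> g (Suc m) = \<ominus> S"
      using skew_rinv_Suc[OF assms(1-3)] f w S fw
      by (simp add: g_def S_def r_minus m_assoc[symmetric])
    moreover have "(f \<otimes>\<^bsub>skew_fps R \<alpha>\<^esub> g) (Suc m) = f 0 \<otimes> g (Suc m) \<oplus> S"
    proof -
      have "{0..Suc m} = insert 0 {1..Suc m}" by auto
      then show ?thesis
        unfolding skew_fps_mult S_def using f g
        by (simp add: finsum_insert funpow_closed[OF \<alpha>] Pi_def)
    qed
    ultimately show ?thesis
      using S Suc by (simp add: l_neg skew_fps_one const_fps_def)
  qed
qed

lemma skew_fps_Reg_elI:
  assumes \<alpha>: "\<alpha> \<in> carrier R \<rightarrow> carrier R" and f: "f \<in> carrier (skew_fps R \<alpha>)"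
    and w: "w \<in> carrier R" and fw: "f 0 \<otimes> w = \<one>"
  shows "f \<in> Reg_el (skew_fps R \<alpha>)"
proof (rule Reg_elI)
  show "skew_rinv R \<alpha> f w \<in> carrier (skew_fps R \<alpha>)"
    using skew_rinv_closed[OF \<alpha> f w] .
  show "f = f \<otimes>\<^bsub>skew_fps R \<alpha>\<^esub> skew_rinv R \<alpha> f w \<otimes>\<^bsub>skew_fps R \<alpha>\<^esub> f"
    using skew_rinv_right_inverse[OF assms] skew_fps_one_mult[OF \<alpha> f] by simp
qed (rule f)

lemma skew_fps_coeff_0_Reg_el:
  assumes "f \<in> Reg_el (skew_fps R \<alpha>)"
  shows "f 0 \<in> Reg_el R"
proof -
  obtain y where f: "f \<in> carrier (skew_fps R \<alpha>)" and y: "y \<in> carrier (skew_fps R \<alpha>)"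
    and fyf: "f = f \<otimes>\<^bsub>skew_fps R \<alpha>\<^esub> y \<otimes>\<^bsub>skew_fps R \<alpha>\<^esub> f"
    using assms by (rule Reg_elE)
  have "f 0 = f 0 \<otimes> y 0 \<otimes> f 0"
    using fun_cong[OF fyf, of 0] f y by (simp add: skew_fps_mult_0)
  with f y show ?thesis by (intro Reg_elI) auto
qed

lemma skew_fps_coeff_0_Idem_el:
  assumes "e \<in> Idem_el (skew_fps R \<alpha>)"
  shows "e 0 \<in> Idem_el R"
proof (rule Idem_elI)
  have e: "e \<in> carrier (skew_fps R \<alpha>)" "e \<otimes>\<^bsub>skew_fps R \<alpha>\<^esub> e = e"
    using Idem_elD[OF assms] by auto
  then show "e 0 \<in> carrier R" by simp
  show "e 0 \<otimes> e 0 = e 0"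
    using fun_cong[OF e(2), of 0] e(1) by (simp add: skew_fps_mult_0)
qed

lemma weakly_r_clean_skew_fps:
  assumes ab: "abelian_ring R" and \<alpha>: "\<alpha> \<in> carrier R \<rightarrow> carrier R" and R: "weakly_r_clean R"
  shows "weakly_r_clean (skew_fps R \<alpha>)"
  unfolding weakly_r_clean_def
proof
  fix f assume f: "f \<in> carrier (skew_fps R \<alpha>)"
  then have "weakly_r_clean_elem R (f 0)"
    using R unfolding weakly_r_clean_def by simp
  then obtain U W E where U: "U \<in> carrier R" and W: "W \<in> carrier R" and UW: "U \<otimes> W = \<one>"
    and E: "E \<in> Idem_el R" and f0: "f 0 = U \<oplus> E \<or> f 0 = U \<ominus> E"
    by (rule weakly_r_clean_elem_right_unit_idem[OF ab])
  define r where "r = f(0 := U)"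
  have r: "r \<in> carrier (skew_fps R \<alpha>)" using f U by (simp add: r_def)
  have cE: "const_fps R E \<in> carrier (skew_fps R \<alpha>)"
    using Idem_elD(1)[OF E] by (simp add: const_fps_def)
  have "r \<in> Reg_el (skew_fps R \<alpha>)"
    using skew_fps_Reg_elI[OF \<alpha> r W] UW by (simp add: r_def)
  moreover have "const_fps R E \<in> Idem_el (skew_fps R \<alpha>)"
    using const_fps_Idem_el[OF \<alpha> E] .
  moreover have "f = r \<oplus>\<^bsub>skew_fps R \<alpha>\<^esub> const_fps R E \<or> f = r \<ominus>\<^bsub>skew_fps R \<alpha>\<^esub> const_fps R E"
    using f0 f cE by (auto simp: fun_eq_iff r_def const_fps_def minus_eq)
  ultimately show "weakly_r_clean_elem (skew_fps R \<alpha>) f"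
    unfolding weakly_r_clean_elem_def by blast
qed

lemma weakly_r_clean_of_skew_fps:
  assumes S: "weakly_r_clean (skew_fps R \<alpha>)"
  shows "weakly_r_clean R"
  unfolding weakly_r_clean_def
proof
  fix a assume a: "a \<in> carrier R"
  then have "const_fps R a \<in> carrier (skew_fps R \<alpha>)"
    by (simp add: const_fps_def)
  then obtain r e where r: "r \<in> Reg_el (skew_fps R \<alpha>)" and e: "e \<in> Idem_el (skew_fps R \<alpha>)"
    and a_eq: "const_fps R a = r \<oplus>\<^bsub>skew_fps R \<alpha>\<^esub> e \<or> const_fps R a = r \<ominus>\<^bsub>skew_fps R \<alpha>\<^esub> e"
    using S unfolding weakly_r_clean_def weakly_r_clean_elem_def by blast
  from a_eq have "const_fps R a 0 = (r \<oplus>\<^bsub>skew_fps R \<alpha>\<^esub> e) 0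
      \<or> const_fps R a 0 = (r \<ominus>\<^bsub>skew_fps R \<alpha>\<^esub> e) 0"
    by auto
  then have "a = r 0 \<oplus> e 0 \<or> a = r 0 \<ominus> e 0"
    using Idem_elD(1)[OF e] by (simp add: const_fps_def del: skew_fps_carrier)
  then show "weakly_r_clean_elem R a"
    using skew_fps_coeff_0_Reg_el[OF r] skew_fps_coeff_0_Idem_el[OF e]
    unfolding weakly_r_clean_elem_def by blast
qed

lemma weakly_r_clean_skew_fps_iff:
  "abelian_ring R \<Longrightarrow> \<alpha> \<in> carrier R \<rightarrow> carrier R
    \<Longrightarrow> weakly_r_clean (skew_fps R \<alpha>) \<longleftrightarrow> weakly_r_clean R"
  using weakly_r_clean_skew_fps weakly_r_clean_of_skew_fps by blast

end

theorem proposition2p12: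
  fixes R :: "('a, 'b) ring_scheme" and \<alpha> :: "'a \<Rightarrow> 'a"
  assumes "ring R"
    and "abelian_ring R"
    and "\<alpha> \<in> ring_hom R R"
  shows "(weakly_r_clean R \<longleftrightarrow> weakly_r_clean (fps_ring R))
       \<and> (weakly_r_clean (fps_ring R) \<longleftrightarrow> weakly_r_clean (skew_fps R \<alpha>))"
proof -
  interpret ring R by (rule assms(1))
  have "\<alpha> \<in> carrier R \<rightarrow> carrier R"
    using ring_hom_closed[OF assms(3)] by blast
  moreover have "id \<in> carrier R \<rightarrow> carrier R"
    by simp
  ultimately show ?thesis
    unfolding fps_ring_def using weakly_r_clean_skew_fps_iff[OF assms(2)] by simp
qed

end
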